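(* Let $p$ be a prime, $\alpha,\beta\in\overline{\mathbf F_p}$ with $\alpha\ne0$, and let $k,N$ be integers with $0\le k<N<p$. (i) There exists $\lambda\in\mathbf F_p(\alpha^N)$ such that $|\mathbf F_p((\beta+\lambda\alpha^k)^N)|\ge|\mathbf F_p(\alpha^N)|$. (ii) If $\mathbf F_p(\alpha^N)\ne\mathbf F_p(\alpha^N,\beta^N,\alpha^k\beta^{N-1})$, then there exists $\lambda\in\mathbf F_p(\alpha^N)$ such that $|\mathbf F_p((\beta+\lambda\alpha^k)^N)|>|\mathbf F_p(\alpha^N)|$.
   Context: $\overline{\mathbf F_p}$ denotes an algebraic closure of the field $\mathbf F_p$ with $p$ elements; $\mathbf F_p(\gamma)$ is the subfield generated by $\gamma$. *)

theory Defs
  imports "HOL-Computational_Algebra.Polynomial"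
begin

definition is_subfield :: "'a::field set \<Rightarrow> bool" where
  "is_subfield K \<longleftrightarrow> 0 \<in> K \<and> 1 \<in> K \<and>
     (\<forall>x\<in>K. \<forall>y\<in>K. x + y \<in> K \<and> x * y \<in> K) \<and>
     (\<forall>x\<in>K. - x \<in> K \<and> inverse x \<in> K)"

(* The subfield generated by S (over the prime field): the smallest subfield containing S.
   In characteristic p this is F_p(S). *)
definition gen_field :: "'a::field set \<Rightarrow> 'a set" where
  "gen_field S = \<Inter>{K. is_subfield K \<and> S \<subseteq> K}"

definition algebraic_over_prime_field :: "'a::field \<Rightarrow> bool" where
  "algebraic_over_prime_field x \<longleftrightarrow>
     (\<exists>q::'a poly. q \<noteq> 0 \<and> (\<forall>i. coeff q i \<in> range of_nat) \<and> poly q x = 0)"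

definition is_alg_closure_of_Fp :: "'a::field itself \<Rightarrow> nat \<Rightarrow> bool" where
  "is_alg_closure_of_Fp _ p \<longleftrightarrow> prime p \<and> CHAR('a) = p \<and>
     (\<forall>q::'a poly. degree q > 0 \<longrightarrow> (\<exists>x. poly q x = 0)) \<and>
     (\<forall>x::'a. algebraic_over_prime_field x)"

end

theory Submission
  imports Defs "HOL-Number_Theory.Cong"
begin

text \<open>Let \<open>K = F\<^sub>p(\<alpha> ^ N)\<close>, of order \<open>p ^ d\<close>. Every finite subfield is an \<open>F\<^sub>p\<close>-vector space,
  so an element generating a field smaller than \<open>K\<close> is a root of \<open>y ^ p ^ e = y\<close> for some
  \<open>e < d\<close>; there are at most \<open>p + \<dots> + p ^ (d - 1)\<close> of them. The map \<open>c \<mapsto> (\<beta> + c \<alpha> ^ k) ^ N\<close>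
  takes each value at most \<open>N < p\<close> times, so at least \<open>p\<close> parameters \<open>c \<in> K\<close> give a generated
  field of order at least \<open>|K|\<close>, which is (i). If all of them gave exactly \<open>K\<close>, the polynomial
  \<open>(\<beta> + X \<alpha> ^ k) ^ N\<close> of degree \<open>N < p\<close> would map \<open>p\<close> points of \<open>K\<close> into \<open>K\<close>, so it would
  equal its twist by the Frobenius of \<open>K\<close> and have its coefficients in \<open>K\<close>. The first two,
  \<open>\<beta> ^ N\<close> and \<open>N \<alpha> ^ k \<beta> ^ (N - 1)\<close>, then force \<open>F\<^sub>p(\<alpha> ^ N, \<beta> ^ N, \<alpha> ^ k \<beta> ^ (N - 1)) = K\<close>,
  which is (ii).\<close>

section \<open>Finite subfields\<close>

lemma gen_field_is_subfield: "is_subfield (gen_field S)"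
  unfolding gen_field_def is_subfield_def by blast

lemma gen_field_superset: "S \<subseteq> gen_field S"
  unfolding gen_field_def by blast

lemma gen_field_least: "is_subfield K \<Longrightarrow> S \<subseteq> K \<Longrightarrow> gen_field S \<subseteq> K"
  unfolding gen_field_def by blast

lemma gen_field_eq_if_subset_gen_field:
  assumes "S \<subseteq> T" "T \<subseteq> gen_field S"
  shows "gen_field T = gen_field S"
proof
  show "gen_field T \<subseteq> gen_field S" using assms(2) by (rule gen_field_least[OF gen_field_is_subfield])
  show "gen_field S \<subseteq> gen_field T"
    using assms(1) gen_field_superset by (intro gen_field_least[OF gen_field_is_subfield]) blast
qed

lemma subfield_of_nat: "is_subfield K \<Longrightarrow> of_nat m \<in> K"
  by (induction m) (auto simp: is_subfield_def)

lemma subfield_mult_cancel: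
  assumes "is_subfield K" "a \<in> K" "a \<noteq> 0" "a * x \<in> K"
  shows "x \<in> K"
proof -
  have "inverse a * (a * x) \<in> K" using assms unfolding is_subfield_def by blast
  thus ?thesis using assms(3) by (simp flip: mult.assoc)
qed

lemma two_le_card_subfield:
  fixes K :: "'a::field set"
  assumes "is_subfield K" "finite K"
  shows "2 \<le> card K"
proof -
  have "card {0::'a, 1} \<le> card K"
    using assms by (intro card_mono) (simp_all add: is_subfield_def)
  thus ?thesis by simp
qed

text \<open>Lagrange's theorem for the multiplicative group, via the bijection \<open>z \<mapsto> y z\<close> of \<open>F - {0}\<close>.\<close>

lemma subfield_power_card_eq:
  assumes "is_subfield F" "finite F" "y \<in> F"
  shows "y ^ card F = y"
proof (cases "y = 0")
  case True
  have "card F > 0" using assms card_gt_0_iff by blast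
  thus ?thesis using True by simp
next
  case False
  have "0 \<in> F" using assms(1) by (simp add: is_subfield_def)
  hence card_F: "card F = Suc (card (F - {0}))" using card_Suc_Diff1[OF assms(2)] by simp
  have "(\<Prod>z\<in>F-{0}. y * z) = (\<Prod>z\<in>F-{0}. z)"
  proof (rule prod.reindex_bij_witness[of _ "\<lambda>z. z / y" "\<lambda>z. y * z"])
    fix z assume "z \<in> F - {0}"
    thus "z / y \<in> F - {0}" "y * z \<in> F - {0}"
      using assms(1,3) False by (auto simp: is_subfield_def divide_inverse)
  qed (use False in auto)
  moreover have "(\<Prod>z\<in>F-{0}. y * z) = y ^ card (F - {0}) * (\<Prod>z\<in>F-{0}. z)"
    by (simp add: prod.distrib)
  moreover have "(\<Prod>z\<in>F-{0}. z) \<noteq> 0" using assms(2) by simp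
  ultimately have "y ^ card (F - {0}) = 1" by simp
  hence "y ^ Suc (card (F - {0})) = y" by simp
  thus ?thesis by (simp only: card_F)
qed

lemma
  assumes "n \<ge> 2"
  shows finite_roots_power_eq_self: "finite {y::'a::idom. y ^ n = y}"
    and card_roots_power_eq_self_le: "card {y::'a. y ^ n = y} \<le> n"
proof -
  define q :: "'a poly" where "q = monom 1 n - [:0, 1:]"
  have roots: "{y. y ^ n = y} = {y. poly q y = 0}"
    by (simp add: q_def poly_monom)
  have "coeff q n = 1" using assms by (simp add: q_def coeff_pCons split: nat.split)
  hence "q \<noteq> 0" by auto
  moreover have "degree q \<le> n" unfolding q_def
    by (rule order.trans[OF degree_diff_le_max]) (use assms in \<open>auto simp: degree_monom_eq\<close>)
  ultimately show "finite {y::'a. y ^ n = y}" "card {y::'a. y ^ n = y} \<le> n"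
    unfolding roots using poly_roots_finite card_poly_roots_bound order.trans by blast+
qed

lemma mem_finite_subfield_iff:
  assumes "is_subfield K" "finite K"
  shows "y \<in> K \<longleftrightarrow> y ^ card K = y"
proof -
  have "K = {y. y ^ card K = y}"
  proof (rule card_seteq)
    show "K \<subseteq> {y. y ^ card K = y}" using subfield_power_card_eq[OF assms] by blast
    have "card K \<ge> 2" by (rule two_le_card_subfield[OF assms])
    thus "finite {y::'a. y ^ card K = y}" by (rule finite_roots_power_eq_self)
    show "card {y::'a. y ^ card K = y} \<le> card K"
      using \<open>card K \<ge> 2\<close> by (rule card_roots_power_eq_self_le)
  qed
  thus ?thesis by blast
qed

lemma mem_finite_subfield_if_card_gen_field_eq:
  assumes "is_subfield K" "finite K" "finite (gen_field {y})" "card (gen_field {y}) = card K"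
  shows "y \<in> K"
proof -
  have "y ^ card (gen_field {y}) = y"
    using subfield_power_card_eq[OF gen_field_is_subfield assms(3)] gen_field_superset by blast
  thus ?thesis using mem_finite_subfield_iff[OF assms(1,2)] assms(4) by simp
qed

section \<open>Frobenius\<close>

lemma of_nat_power_CHAR:
  assumes "prime CHAR('a::comm_semiring_1)"
  shows "(of_nat m :: 'a) ^ CHAR('a) = of_nat m"
proof (induction m)
  case 0 thus ?case using assms prime_gt_0_nat by (simp add: zero_power)
next
  case (Suc m)
  have "(1 + of_nat m :: 'a) ^ CHAR('a) = 1 ^ CHAR('a) + of_nat m ^ CHAR('a)"
    by (rule freshmans_dream[OF assms refl])
  thus ?case using Suc by simp
qed

lemma Frobenius_fixed_is_subfield:
  assumes "prime CHAR('a::field)" "n = CHAR('a) ^ e"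
  shows "is_subfield {y::'a. y ^ n = y}"
proof -
  have add: "(x + y) ^ n = x ^ n + y ^ n" for x y :: 'a
    by (rule freshmans_dream'[OF assms])
  have "n > 0" using assms prime_gt_0_nat by simp
  have "(- y) ^ n = - y" if "y ^ n = y" for y :: 'a
  proof -
    have "(- y) ^ n + y ^ n = 0" using \<open>n > 0\<close> by (simp flip: add)
    thus ?thesis using that by (simp add: eq_neg_iff_add_eq_0)
  qed
  thus ?thesis unfolding is_subfield_def
    using \<open>n > 0\<close> add by (auto simp: power_mult_distrib power_inverse)
qed

lemma Frobenius_inj:
  assumes "prime CHAR('a::idom)" "n = CHAR('a) ^ e" "x ^ n = y ^ n"
  shows "x = (y::'a)"
proof -
  have "x ^ n = (x - y) ^ n + y ^ n"
    using freshmans_dream'[OF assms(1,2), of "x - y" y] by simp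
  hence "(x - y) ^ n = 0" using assms(3) by simp
  thus ?thesis by simp
qed

lemma poly_map_poly_Frobenius:
  assumes "prime CHAR('a::comm_semiring_1)" "n = CHAR('a) ^ e"
  shows "poly (map_poly (\<lambda>c. c ^ n) q) (x ^ n) = poly q (x::'a) ^ n"
proof -
  have "n > 0" using assms prime_gt_0_nat by simp
  hence "(\<lambda>c. c ^ n) (0::'a) = 0" by (simp add: zero_power)
  thus ?thesis
    by (induction q) (simp_all add: map_poly_pCons freshmans_dream'[OF assms] power_mult_distrib)
qed

lemma poly_power_CHAR_of_nat_coeffs:
  assumes p: "prime CHAR('a::comm_semiring_1)" and "\<forall>i. coeff q i \<in> range of_nat"
  shows "poly q (y ^ CHAR('a)) = poly q (y::'a) ^ CHAR('a)"
proof -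
  have "coeff q i ^ CHAR('a) = coeff q i" for i
  proof -
    obtain m where "coeff q i = of_nat m" using assms(2) by blast
    thus ?thesis using of_nat_power_CHAR[OF p] by simp
  qed
  moreover have "(0::'a) ^ CHAR('a) = 0" using p prime_gt_0_nat by (simp add: zero_power)
  ultimately have "map_poly (\<lambda>c. c ^ CHAR('a)) q = q" by (intro poly_eqI) (simp add: coeff_map_poly)
  thus ?thesis using poly_map_poly_Frobenius[OF p power_one_right[symmetric], of q y] by simp
qed

lemma algebraic_over_prime_field_Frobenius_periodic:
  assumes p: "prime CHAR('a::field)" and "algebraic_over_prime_field (x::'a)"
  shows "\<exists>e>0. x ^ (CHAR('a) ^ e) = x"
proof -
  obtain q :: "'a poly" where q: "q \<noteq> 0" "\<forall>i. coeff q i \<in> range of_nat" "poly q x = 0"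
    using assms(2) unfolding algebraic_over_prime_field_def by blast
  note Frobenius = poly_power_CHAR_of_nat_coeffs[OF p q(2)]
  define f where "f j = x ^ (CHAR('a) ^ j)" for j
  have "poly q (f j) = 0" for j
  proof (induction j)
    case 0
    show ?case using q(3) by (simp add: f_def)
  next
    case (Suc j)
    have "f (Suc j) = f j ^ CHAR('a)" unfolding f_def by (simp only: power_Suc2 power_mult)
    hence "poly q (f (Suc j)) = poly q (f j) ^ CHAR('a)" by (simp only: Frobenius)
    thus ?case using Suc.IH prime_gt_0_nat[OF p] by (simp add: zero_power)
  qed
  hence "range f \<subseteq> {y. poly q y = 0}" by blast
  hence "finite (range f)" using poly_roots_finite[OF q(1)] by (rule finite_subset)
  hence "\<not> inj f" using finite_imageD infinite_UNIV_nat by blast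
  then obtain i j where "i \<noteq> j" "f i = f j" unfolding inj_def by blast
  hence "\<exists>i j. i < j \<and> f i = f j"
    by (intro exI[of _ "min i j"] exI[of _ "max i j"]) (auto simp: min_def max_def)
  then obtain i j where ij: "i < j" "f i = f j" by blast
  have "(x ^ (CHAR('a) ^ (j - i))) ^ (CHAR('a) ^ i) = x ^ (CHAR('a) ^ i)"
    using ij by (simp add: f_def flip: power_mult power_add)
  hence "x ^ (CHAR('a) ^ (j - i)) = x" by (rule Frobenius_inj[OF p refl])
  thus ?thesis using ij by (intro exI[of _ "j - i"]) auto
qed

lemma finite_gen_field_singleton:
  assumes p: "prime CHAR('a::field)" and "algebraic_over_prime_field (x::'a)"
  shows "finite (gen_field {x})"
proof -
  obtain e where e: "e > 0" "x ^ (CHAR('a) ^ e) = x"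
    using algebraic_over_prime_field_Frobenius_periodic[OF assms] by blast
  have "CHAR('a) ^ e \<ge> 2" using one_less_power[OF prime_gt_1_nat[OF p] e(1)] by linarith
  moreover have "gen_field {x} \<subseteq> {y::'a. y ^ (CHAR('a) ^ e) = y}"
    by (rule gen_field_least[OF Frobenius_fixed_is_subfield[OF p refl]]) (use e in auto)
  ultimately show ?thesis using finite_roots_power_eq_self finite_subset by blast
qed

section \<open>Additive subgroups in prime characteristic\<close>

definition additive_submonoid :: "'a::monoid_add set \<Rightarrow> bool" where
  "additive_submonoid V \<longleftrightarrow> 0 \<in> V \<and> (\<forall>x\<in>V. \<forall>y\<in>V. x + y \<in> V)"

lemma additive_submonoid_of_nat_mult:
  "additive_submonoid V \<Longrightarrow> v \<in> V \<Longrightarrow> of_nat m * v \<in> (V::'a::semiring_1 set)"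
  by (induction m) (auto simp: additive_submonoid_def distrib_right)

lemma additive_submonoid_uminus:
  assumes "prime CHAR('a::ring_1)" "additive_submonoid V" "v \<in> V"
  shows "- v \<in> (V::'a set)"
proof -
  have "of_nat (CHAR('a) - 1) = (- 1 :: 'a)" using prime_gt_0_nat[OF assms(1)] by (simp add: of_nat_diff)
  hence "- v = of_nat (CHAR('a) - 1) * v" by simp
  thus ?thesis using additive_submonoid_of_nat_mult[OF assms(2,3)] by (simp only:)
qed

lemma additive_submonoid_of_nat_mult_cancel:
  assumes p: "prime CHAR('a::ring_1)" and V: "additive_submonoid V"
    and "\<not> CHAR('a) dvd c" "of_nat c * v \<in> V"
  shows "v \<in> (V::'a set)"
proof -
  have "coprime c CHAR('a)" using prime_imp_coprime[OF p assms(3)] by (rule coprime_commute[THEN iffD1])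
  then obtain m where "[c * m = 1] (mod CHAR('a))" using cong_solve_coprime_nat by auto
  hence "of_nat (c * m) = (of_nat 1 :: 'a)" by (simp only: of_nat_eq_iff_cong_CHAR)
  hence "of_nat m * of_nat c = (1 :: 'a)" by (metis of_nat_mult mult.commute of_nat_1)
  hence "of_nat m * (of_nat c * v) = v" by (simp flip: mult.assoc)
  thus ?thesis using additive_submonoid_of_nat_mult[OF V assms(4), of m] by (simp only:)
qed

definition adjoin_additive :: "'a::semiring_1 set \<Rightarrow> 'a \<Rightarrow> 'a set" where
  "adjoin_additive V v = (\<Union>i<CHAR('a). (\<lambda>a. a + of_nat i * v) ` V)"

lemma of_nat_mod_CHAR: "(of_nat (m mod CHAR('a)) :: 'a::semiring_1_cancel) = of_nat m"
  by (simp add: of_nat_eq_iff_cong_CHAR)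

lemma additive_submonoid_adjoin_additive:
  assumes "prime CHAR('a::semiring_1_cancel)" "additive_submonoid V"
  shows "additive_submonoid (adjoin_additive V (v::'a))"
  unfolding additive_submonoid_def
proof (intro conjI ballI)
  show "0 \<in> adjoin_additive V v"
    using assms prime_gt_0_nat unfolding adjoin_additive_def additive_submonoid_def
    by (intro UN_I[of 0] rev_image_eqI[of 0]) auto
next
  fix x y assume "x \<in> adjoin_additive V v" "y \<in> adjoin_additive V v"
  then obtain i j a b where "a \<in> V" "b \<in> V" "x = a + of_nat i * v" "y = b + of_nat j * v"
    unfolding adjoin_additive_def by blast
  hence "x + y = (a + b) + (of_nat i * v + of_nat j * v)"
    by (simp add: add.assoc add.left_commute)
  also have "of_nat i * v + of_nat j * v = of_nat ((i + j) mod CHAR('a)) * v"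
    by (simp add: of_nat_mod_CHAR distrib_right)
  finally have "x + y = (a + b) + of_nat ((i + j) mod CHAR('a)) * v" .
  moreover have "a + b \<in> V" using assms(2) \<open>a \<in> V\<close> \<open>b \<in> V\<close>
    unfolding additive_submonoid_def by blast
  moreover have "(i + j) mod CHAR('a) < CHAR('a)" using assms(1) prime_gt_0_nat by simp
  ultimately show "x + y \<in> adjoin_additive V v" unfolding adjoin_additive_def by blast
qed

lemma adjoin_additive_subset:
  assumes "additive_submonoid W" "V \<subseteq> W" "v \<in> W"
  shows "adjoin_additive V (v::'a::semiring_1) \<subseteq> W"
  unfolding adjoin_additive_def
proof (intro UN_least image_subsetI)
  fix i a assume "a \<in> V"
  thus "a + of_nat i * v \<in> W"
    using assms additive_submonoid_of_nat_mult[OF assms(1,3)]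
    unfolding additive_submonoid_def by blast
qed

lemma additive_submonoid_translates_differ:
  assumes p: "prime CHAR('a::ring_1)" and V: "additive_submonoid V" and "v \<notin> V"
    and "a \<in> V" "b \<in> V" "i < j" "j < CHAR('a)"
  shows "a + of_nat i * v \<noteq> b + of_nat j * (v::'a)"
proof
  assume eq: "a + of_nat i * v = b + of_nat j * v"
  have "of_nat (j - i) * v = of_nat j * v - of_nat i * v"
    using \<open>i < j\<close> by (simp add: of_nat_diff left_diff_distrib)
  also have "\<dots> = a - b"
    using eq by (metis add_diff_cancel_left add_diff_cancel_right)
  also have "\<dots> = a + - b" by (rule diff_conv_add_uminus)
  also have "\<dots> \<in> V"
    using assms(4,5) V additive_submonoid_uminus[OF p V assms(5)]
    unfolding additive_submonoid_def by blast
  finally have "of_nat (j - i) * v \<in> V" .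
  moreover have "\<not> CHAR('a) dvd (j - i)" using assms(6,7) by (simp add: nat_dvd_not_less)
  ultimately have "v \<in> V" by (rule additive_submonoid_of_nat_mult_cancel[OF p V, rotated])
  with \<open>v \<notin> V\<close> show False by blast
qed

lemma card_adjoin_additive:
  assumes p: "prime CHAR('a::ring_1)" and V: "additive_submonoid V" "finite V" and "v \<notin> V"
  shows "card (adjoin_additive V (v::'a)) = CHAR('a) * card V"
proof -
  note translates_differ = additive_submonoid_translates_differ[OF p V(1) \<open>v \<notin> V\<close>]
  have "(\<lambda>a. a + of_nat i * v) ` V \<inter> (\<lambda>a. a + of_nat j * v) ` V = {}"
    if "i < CHAR('a)" "j < CHAR('a)" "i \<noteq> j" for i j
    using that translates_differ[of _ _ i j] translates_differ[of _ _ j i]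
    by (force simp: neq_iff)
  hence "card (adjoin_additive V v) = (\<Sum>i<CHAR('a). card ((\<lambda>a. a + of_nat i * v) ` V))"
    unfolding adjoin_additive_def using V(2) by (intro card_UN_disjoint) auto
  also have "\<dots> = (\<Sum>i<CHAR('a). card V)"
    by (intro sum.cong refl card_image) (auto simp: inj_on_def)
  finally show ?thesis by simp
qed

lemma card_additive_submonoid_prime_power:
  assumes p: "prime CHAR('a::ring_1)" and W: "finite (W::'a set)" "additive_submonoid W"
  shows "\<exists>e. card W = CHAR('a) ^ e"
proof -
  have grow: "\<exists>e. card W = CHAR('a) ^ e"
    if "V \<subseteq> W" "additive_submonoid V" "card V = CHAR('a) ^ a" for V a
    using that
  proof (induction "card W - card V" arbitrary: V a rule: less_induct)
    case (less V a)
    show ?case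
    proof (cases "V = W")
      case False
      then obtain v where v: "v \<in> W" "v \<notin> V" using less.prems(1) by blast
      have "finite V" using less.prems(1) W(1) finite_subset by blast
      have card_V': "card (adjoin_additive V v) = CHAR('a) ^ Suc a"
        using card_adjoin_additive[OF p less.prems(2) \<open>finite V\<close> v(2)] less.prems(3) by simp
      have sub: "adjoin_additive V v \<subseteq> W"
        by (rule adjoin_additive_subset[OF W(2) less.prems(1) v(1)])
      have "card V < card (adjoin_additive V v)"
        using card_V' less.prems(3) prime_gt_1_nat[OF p] by simp
      moreover have "card (adjoin_additive V v) \<le> card W" using sub W(1) card_mono by blast
      ultimately have "card W - card (adjoin_additive V v) < card W - card V" by linarith
      moreover have "additive_submonoid (adjoin_additive V v)"
        by (rule additive_submonoid_adjoin_additive[OF p less.prems(2)])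
      ultimately show ?thesis using less.hyps[OF _ sub _ card_V'] by blast
    qed (use less.prems in blast)
  qed
  show ?thesis by (rule grow[of "{0}" 0]) (use W in \<open>auto simp: additive_submonoid_def\<close>)
qed

lemma card_finite_subfield_prime_power:
  assumes "prime CHAR('a::field)" "is_subfield F" "finite F"
  shows "\<exists>e>0. card (F::'a set) = CHAR('a) ^ e"
proof -
  have "additive_submonoid F" using assms(2) by (simp add: is_subfield_def additive_submonoid_def)
  then obtain e where e: "card F = CHAR('a) ^ e"
    using card_additive_submonoid_prime_power[OF assms(1,3)] by blast
  have "e \<noteq> 0" using two_le_card_subfield[OF assms(2,3)] e by (intro notI) simp
  thus ?thesis using e by blast
qed

section \<open>Counting parameters\<close>

lemma geometric_sum_nat:
  fixes p :: nat
  assumes "p \<ge> 1" "d \<ge> 1"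
  shows "(p - 1) * (\<Sum>e\<in>{1..<d}. p ^ e) + p = p ^ d"
  using assms(2)
proof (induction d rule: nat_induct_at_least)
  case (Suc d)
  have "(\<Sum>e\<in>{1..<Suc d}. p ^ e) = (\<Sum>e\<in>{1..<d}. p ^ e) + p ^ d"
    using Suc.hyps by (simp add: sum.atLeastLessThan_Suc)
  hence "(p - 1) * (\<Sum>e\<in>{1..<Suc d}. p ^ e) + p = (p - 1) * p ^ d + ((p - 1) * (\<Sum>e\<in>{1..<d}. p ^ e) + p)"
    by (simp add: distrib_left add_ac)
  also have "\<dots> = (p - 1) * p ^ d + p ^ d" using Suc.IH by simp
  also have "\<dots> = p ^ Suc d" using assms(1) by (cases p) simp_all
  finally show ?case .
qed simp

lemma
  assumes p: "prime CHAR('a::field)" and alg: "\<And>x::'a. algebraic_over_prime_field x"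
    and "d \<ge> 1"
  defines "S \<equiv> {x::'a. card (gen_field {x}) < CHAR('a) ^ d}"
  shows finite_elements_small_gen_field: "finite S"
    and card_elements_small_gen_field: "(CHAR('a) - 1) * card S + CHAR('a) \<le> CHAR('a) ^ d"
proof -
  let ?p = "CHAR('a)"
  define R where "R e = {y::'a. y ^ (?p ^ e) = y}" for e
  have R: "finite (R e)" "card (R e) \<le> ?p ^ e" if "e \<ge> 1" for e
  proof -
    have "?p ^ e \<ge> 2"
      using one_less_power[OF prime_gt_1_nat[OF p], of e] that by linarith
    thus "finite (R e)" unfolding R_def by (rule finite_roots_power_eq_self)
    show "card (R e) \<le> ?p ^ e" unfolding R_def using \<open>?p ^ e \<ge> 2\<close> by (rule card_roots_power_eq_self_le)
  qed
  have sub: "S \<subseteq> (\<Union>e\<in>{1..<d}. R e)"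
  proof
    fix x assume "x \<in> S"
    have F: "is_subfield (gen_field {x})" "finite (gen_field {x})"
      using gen_field_is_subfield finite_gen_field_singleton[OF p alg] by auto
    then obtain e where e: "e > 0" "card (gen_field {x}) = ?p ^ e"
      using card_finite_subfield_prime_power[OF p] by blast
    have "?p ^ e < ?p ^ d" using \<open>x \<in> S\<close> e(2) by (simp add: S_def)
    hence "e < d" using prime_gt_1_nat[OF p] by (simp add: power_strict_increasing_iff)
    moreover have "x ^ card (gen_field {x}) = x"
      using subfield_power_card_eq[OF F] gen_field_superset by blast
    ultimately show "x \<in> (\<Union>e\<in>{1..<d}. R e)" using e by (auto simp: R_def)
  qed
  have fin: "finite (\<Union>e\<in>{1..<d}. R e)" using R by auto
  thus "finite S" using sub by (rule finite_subset[rotated])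
  have "card S \<le> card (\<Union>e\<in>{1..<d}. R e)" by (rule card_mono[OF fin sub])
  also have "\<dots> \<le> (\<Sum>e\<in>{1..<d}. card (R e))" by (rule card_UN_le) simp
  also have "\<dots> \<le> (\<Sum>e\<in>{1..<d}. ?p ^ e)" using R by (intro sum_mono) auto
  finally have "(?p - 1) * card S \<le> (?p - 1) * (\<Sum>e\<in>{1..<d}. ?p ^ e)" by simp
  thus "(?p - 1) * card S + ?p \<le> ?p ^ d"
    using geometric_sum_nat[of ?p d] prime_gt_0_nat[OF p] \<open>d \<ge> 1\<close> by linarith
qed

lemma card_parameters_large_gen_field:
  fixes g :: "'a::field \<Rightarrow> 'a" and K :: "'a set"
  assumes p: "prime CHAR('a)" and alg: "\<And>x::'a. algebraic_over_prime_field x"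
    and K: "finite K" "card K = CHAR('a) ^ d" "d \<ge> 1"
    and fibres: "\<And>v. card {c\<in>K. g c = v} \<le> m" and "m < CHAR('a)"
  shows "CHAR('a) \<le> card {c\<in>K. card K \<le> card (gen_field {g c})}"
proof -
  let ?p = "CHAR('a)"
  define S where "S = {x::'a. card (gen_field {x}) < ?p ^ d}"
  have S: "finite S" "(?p - 1) * card S + ?p \<le> ?p ^ d"
    unfolding S_def by (rule finite_elements_small_gen_field[OF p alg K(3)],
      rule card_elements_small_gen_field[OF p alg K(3)])
  define B where "B = {c\<in>K. g c \<in> S}"
  have "B = (\<Union>v\<in>S. {c\<in>K. g c = v})" by (auto simp: B_def)
  hence "card B \<le> (\<Sum>v\<in>S. card {c\<in>K. g c = v})" using card_UN_le[OF S(1)] by simp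
  also have "\<dots> \<le> card S * m"
    using fibres sum_bounded_above[of S "\<lambda>v. card {c\<in>K. g c = v}" m] by simp
  also have "\<dots> \<le> card S * (?p - 1)" using \<open>m < ?p\<close> by (intro mult_left_mono) simp_all
  also have "\<dots> = (?p - 1) * card S" by (rule mult.commute)
  finally have "card B + ?p \<le> card K" using S(2) K(2) by linarith
  moreover have "{c\<in>K. card K \<le> card (gen_field {g c})} = K - B"
    by (auto simp: B_def S_def K(2))
  moreover have "card (K - B) = card K - card B"
    using K(1) by (intro card_Diff_subset) (auto simp: B_def)
  ultimately show ?thesis by simp
qed

text \<open>The twist of \<open>q\<close> by the Frobenius \<open>c \<mapsto> c ^ card K\<close> of \<open>K\<close> agrees with \<open>q\<close> on \<open>A\<close>,
  hence equals \<open>q\<close>.\<close>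

lemma coeff_in_finite_subfield:
  fixes q :: "'a::field poly"
  assumes p: "prime CHAR('a)" and K: "is_subfield K" "finite K"
    and A: "A \<subseteq> K" "degree q < card A" and val: "\<And>c. c \<in> A \<Longrightarrow> poly q c \<in> K"
  shows "coeff q i \<in> K"
proof -
  obtain e where n: "card K = CHAR('a) ^ e"
    using card_finite_subfield_prime_power[OF p K] by blast
  define q' where "q' = map_poly (\<lambda>c. c ^ card K) q"
  have "poly q' c = poly q c" if "c \<in> A" for c
  proof -
    have "c ^ card K = c" using that A(1) mem_finite_subfield_iff[OF K] by blast
    hence "poly q' c = poly q' (c ^ card K)" by simp
    also have "\<dots> = poly q c ^ card K" unfolding q'_def by (rule poly_map_poly_Frobenius[OF p n])
    also have "\<dots> = poly q c" using val[OF that] mem_finite_subfield_iff[OF K] by blast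
    finally show ?thesis .
  qed
  moreover have "degree q' \<le> degree q" unfolding q'_def by (rule map_poly_degree_leq)
  ultimately have "q' = q" using A(2) by (intro poly_eqI_degree[of A]) auto
  have "(0::'a) ^ card K = 0" using two_le_card_subfield[OF K] by (simp add: zero_power)
  hence "coeff q i ^ card K = coeff q' i" unfolding q'_def by (rule coeff_map_poly[symmetric])
  also have "\<dots> = coeff q i" using \<open>q' = q\<close> by simp
  finally show ?thesis using mem_finite_subfield_iff[OF K] by blast
qed

lemma coeff_1_linear_power: "coeff ([:b, a:] ^ n) 1 = of_nat n * b ^ (n - 1) * (a::'a::comm_semiring_1)"
proof (induction n)
  case (Suc n)
  have "[:b, a:] ^ Suc n = smult b ([:b, a:] ^ n) + pCons 0 (smult a ([:b, a:] ^ n))"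
    by (simp add: mult_pCons_left)
  hence "coeff ([:b, a:] ^ Suc n) 1 = b * coeff ([:b, a:] ^ n) 1 + a * coeff ([:b, a:] ^ n) 0"
    by (simp add: coeff_pCons)
  also have "\<dots> = b * (of_nat n * b ^ (n - 1) * a) + a * b ^ n"
    using Suc by (simp add: coeff_0_power)
  also have "\<dots> = of_nat (Suc n) * b ^ n * a"
    by (cases n) (simp_all add: algebra_simps)
  finally show ?case by simp
qed simp

lemma card_fibre_linear_power_le:
  fixes a b :: "'a::idom"
  assumes "a \<noteq> 0" "n > 0"
  shows "card {c\<in>A. (b + c * a) ^ n = v} \<le> n"
proof -
  define q where "q = [:b, a:] ^ n - [:v:]"
  have deg: "degree ([:b, a:] ^ n) = n" using assms(1) by (simp add: degree_power_eq)
  hence "q \<noteq> 0" using assms(2) by (auto simp: q_def)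
  have "degree q \<le> n" unfolding q_def by (rule degree_diff_le) (simp_all add: deg)
  have "{c\<in>A. (b + c * a) ^ n = v} \<subseteq> {c. poly q c = 0}" by (auto simp: q_def mult.commute)
  hence "card {c\<in>A. (b + c * a) ^ n = v} \<le> card {c. poly q c = 0}"
    using poly_roots_finite[OF \<open>q \<noteq> 0\<close>] by (intro card_mono)
  also have "\<dots> \<le> n" using card_poly_roots_bound[OF \<open>q \<noteq> 0\<close>] \<open>degree q \<le> n\<close> by linarith
  finally show ?thesis .
qed

lemma linear_power_coeffs_in_finite_subfield:
  fixes K :: "'a::field set"
  assumes p: "prime CHAR('a)" and K: "is_subfield K" "finite K"
    and A: "A \<subseteq> K" "n < card A" and n: "\<not> CHAR('a) dvd n"
    and val: "\<And>c. c \<in> A \<Longrightarrow> (b + c * a) ^ n \<in> K"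
  shows "b ^ n \<in> K" and "a * b ^ (n - 1) \<in> K"
proof -
  define q where "q = [:b, a:] ^ n"
  have "degree q \<le> n" unfolding q_def by (rule order.trans[OF degree_power_le]) simp
  moreover have "poly q c = (b + c * a) ^ n" for c by (simp add: q_def mult.commute)
  ultimately have coeffs: "coeff q i \<in> K" for i
    using A val by (intro coeff_in_finite_subfield[OF p K A(1)]) auto
  show "b ^ n \<in> K" using coeffs[of 0] by (simp add: q_def coeff_0_power)
  show "a * b ^ (n - 1) \<in> K"
  proof (rule subfield_mult_cancel[OF K(1)])
    show "of_nat n \<in> K" by (rule subfield_of_nat[OF K(1)])
    show "(of_nat n :: 'a) \<noteq> 0" using n by (simp add: of_nat_eq_0_iff_char_dvd)
    show "of_nat n * (a * b ^ (n - 1)) \<in> K"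
      using coeffs[of 1] unfolding q_def coeff_1_linear_power by (simp add: mult_ac)
  qed
qed

lemma card_linear_power_parameters_large_gen_field:
  fixes K :: "'a::field set"
  assumes p: "prime CHAR('a)" and alg: "\<And>x::'a. algebraic_over_prime_field x"
    and K: "is_subfield K" "finite K" and "a \<noteq> 0" "0 < n" "n < CHAR('a)"
  shows "CHAR('a) \<le> card {c\<in>K. card K \<le> card (gen_field {(b + c * a) ^ n})}"
proof -
  obtain d where "d > 0" "card K = CHAR('a) ^ d"
    using card_finite_subfield_prime_power[OF p K] by blast
  thus ?thesis
    by (intro card_parameters_large_gen_field[OF p alg K(2) \<open>card K = _\<close> _
          card_fibre_linear_power_le[OF \<open>a \<noteq> 0\<close> \<open>0 < n\<close>] \<open>n < CHAR('a)\<close>]) simp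
qed

lemma exists_linear_power_parameter_larger_gen_field:
  fixes K :: "'a::field set"
  assumes p: "prime CHAR('a)" and alg: "\<And>x::'a. algebraic_over_prime_field x"
    and K: "is_subfield K" "finite K" and "a \<noteq> 0" "0 < n" "n < CHAR('a)"
    and not_in_K: "\<not> (b ^ n \<in> K \<and> a * b ^ (n - 1) \<in> K)"
  shows "\<exists>c\<in>K. card K < card (gen_field {(b + c * a) ^ n})"
proof (rule ccontr)
  assume no_larger: "\<not> ?thesis"
  define G where "G = {c\<in>K. card K \<le> card (gen_field {(b + c * a) ^ n})}"
  have "(b + c * a) ^ n \<in> K" if "c \<in> G" for c
  proof (rule mem_finite_subfield_if_card_gen_field_eq[OF K finite_gen_field_singleton[OF p alg]])
    have "c \<in> K" "card K \<le> card (gen_field {(b + c * a) ^ n})" using that by (simp_all add: G_def)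
    moreover have "\<not> card K < card (gen_field {(b + c * a) ^ n})" using no_larger \<open>c \<in> K\<close> by blast
    ultimately show "card (gen_field {(b + c * a) ^ n}) = card K" by linarith
  qed
  moreover have "G \<subseteq> K" by (auto simp: G_def)
  moreover have "n < card G"
    using card_linear_power_parameters_large_gen_field[OF p alg K assms(5-7), of b] assms(7)
    unfolding G_def by linarith
  moreover have "\<not> CHAR('a) dvd n" using assms(6,7) by (simp add: nat_dvd_not_less)
  ultimately have "b ^ n \<in> K" "a * b ^ (n - 1) \<in> K"
    using linear_power_coeffs_in_finite_subfield[OF p K] by blast+
  with not_in_K show False by blast
qed

theorem mainTheorem19:
  fixes p k N :: nat and \<alpha> \<beta> :: "'a::field"
  assumes "is_alg_closure_of_Fp TYPE('a) p"
    and "\<alpha> \<noteq> 0"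
    and "k < N" and "N < p"
  shows "(\<exists>c\<in>gen_field {\<alpha> ^ N}.
            card (gen_field {(\<beta> + c * \<alpha> ^ k) ^ N}) \<ge> card (gen_field {\<alpha> ^ N}))
       \<and> (gen_field {\<alpha> ^ N} \<noteq> gen_field {\<alpha> ^ N, \<beta> ^ N, \<alpha> ^ k * \<beta> ^ (N - 1)} \<longrightarrow>
          (\<exists>c\<in>gen_field {\<alpha> ^ N}.
            card (gen_field {(\<beta> + c * \<alpha> ^ k) ^ N}) > card (gen_field {\<alpha> ^ N})))"
proof -
  have p: "prime CHAR('a)" and alg: "\<And>x::'a. algebraic_over_prime_field x"
    and N: "0 < N" "N < CHAR('a)" and "\<alpha> ^ k \<noteq> 0"
    using assms unfolding is_alg_closure_of_Fp_def by auto
  define K where "K = gen_field {\<alpha> ^ N}"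
  have K: "is_subfield K" "finite K"
    unfolding K_def using gen_field_is_subfield finite_gen_field_singleton[OF p alg] by auto
  have "CHAR('a) \<le> card {c\<in>K. card K \<le> card (gen_field {(\<beta> + c * \<alpha> ^ k) ^ N})}"
    by (rule card_linear_power_parameters_large_gen_field[OF p alg K \<open>\<alpha> ^ k \<noteq> 0\<close> N])
  hence "{c\<in>K. card K \<le> card (gen_field {(\<beta> + c * \<alpha> ^ k) ^ N})} \<noteq> {}"
    using N by (intro notI) simp
  hence "\<exists>c\<in>K. card K \<le> card (gen_field {(\<beta> + c * \<alpha> ^ k) ^ N})" by blast
  moreover have "\<exists>c\<in>K. card K < card (gen_field {(\<beta> + c * \<alpha> ^ k) ^ N})"
    if "K \<noteq> gen_field {\<alpha> ^ N, \<beta> ^ N, \<alpha> ^ k * \<beta> ^ (N - 1)}"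
  proof (rule exists_linear_power_parameter_larger_gen_field[OF p alg K \<open>\<alpha> ^ k \<noteq> 0\<close> N])
    show "\<not> (\<beta> ^ N \<in> K \<and> \<alpha> ^ k * \<beta> ^ (N - 1) \<in> K)"
      using that gen_field_superset[of "{\<alpha> ^ N}"]
        gen_field_eq_if_subset_gen_field[of "{\<alpha> ^ N}" "{\<alpha> ^ N, \<beta> ^ N, \<alpha> ^ k * \<beta> ^ (N - 1)}"]
      unfolding K_def by auto
  qed
  ultimately show ?thesis unfolding K_def by blast
qed

end
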